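(* Let $(\gamma_{1j},\gamma_{2j})$, $j=1,\ldots,n$, be independent (across $j$) pairs of possibly correlated Bernoulli random variables with $\mathbb{E}\gamma_{ij}=\pi_{ij}$, let $\eta=(\eta_1,\ldots,\eta_n)$ be i.i.d. Bernoulli$(1/2)$ variables independent of all $\gamma_{ij}$, and let $\boldsymbol{A}=(a_{ij})$ be a deterministic real $n\times n$ matrix. For $0<\tau\le 1/(4\|\boldsymbol{A}\|_2^2)$, $$ \mathbb{E}\Big[\exp\Big(\tau\sum_{i:\eta_i=1}\gamma_{1i}\sum_{j:\eta_j=0}a_{ij}^2\gamma_{2j}\Big)\,\Big|\,\eta\Big]\le\exp\Big(1.44\,\tau\sum_{i\ne j}a_{ij}^2\pi_{1i}\pi_{2j}\Big). $$
   Context: $\|\boldsymbol{A}\|_2$ denotes the operator norm of $\boldsymbol{A}$. *)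

theory Defs
  imports "HOL-Probability.Probability"
begin

end

theory Submission
  imports Defs
begin

(*
  Conditionally on \<eta>, the indices split into the disjoint blocks S = {i. \<eta> i} and
  T = {j. \<not> \<eta> j}; as \<eta> is independent of the pairs (\<gamma>1 j, \<gamma>2 j), the conditional
  expectation is the plain expectation with S and T frozen.  For disjoint S and T the families
  (\<gamma>1 i)_(i \<in> S) and (\<gamma>2 j)_(j \<in> T) are independent, so one integrates out \<gamma>1 first: with
  c i = (\<Sum>j\<in>T. a_ij\<^sup>2 \<gamma>2 j) every coefficient \<tau> c i is at most \<tau> \<parallel>A\<parallel>\<^sup>2 \<le> 1/4, and
  exp u \<le> 1 + 1.16 u on [0, 1/4] bounds the inner moment generating function by
  exp (1.16 \<tau> \<Sum>i. \<pi>1 i c i).  What remains is the moment generating function of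
  \<Sum>j. d j \<gamma>2 j with d j = 1.16 \<tau> \<Sum>i. a_ij\<^sup>2 \<pi>1 i \<le> 0.29 (column sums are also bounded by
  \<parallel>A\<parallel>\<^sup>2), and exp u \<le> 1 + 1.24 u on [0, 0.29] finishes, as 1.16 * 1.24 \<le> 1.44.  The pairs
  in S \<times> T are off the diagonal.
*)

lemma exp_le_linear_of_endpoint:
  fixes L c u :: real
  assumes "exp L \<le> 1 + c * L" "0 < L" "0 \<le> u" "u \<le> L"
  shows "exp u \<le> 1 + c * u"
proof -
  define t where "t = u / L"
  have t: "0 \<le> t" "t \<le> 1" "u = (1 - t) *\<^sub>R 0 + t *\<^sub>R L"
    using assms by (auto simp: t_def field_simps)
  have "exp u \<le> (1 - t) * exp 0 + t * exp L"
    unfolding t(3) by (rule convex_onD[OF exp_convex]) (use t in auto)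
  also have "\<dots> \<le> (1 - t) + t * (1 + c * L)"
    using t assms by (simp add: mult_left_mono)
  also have "\<dots> = 1 + c * u"
    using assms by (simp add: t_def field_simps)
  finally show ?thesis .
qed

lemma exp_of_nat_mult_le:
  fixes x :: real
  assumes "0 \<le> x" "x \<le> 1"
  shows "exp (of_nat n * x) \<le> (1 + x + x\<^sup>2) ^ n"
  unfolding exp_of_nat_mult by (rule power_mono[OF exp_bound[OF assms]]) simp

lemma exp_le_linear_on_quarter:
  fixes u :: real
  assumes "0 \<le> u" "u \<le> 1/4"
  shows "exp u \<le> 1 + 1.16 * u"
proof (rule exp_le_linear_of_endpoint[OF _ _ assms])
  have "exp (1/4 :: real) = exp (of_nat 32 * (1/128))" by simp
  also have "\<dots> \<le> (1 + 1/128 + (1/128)\<^sup>2) ^ 32" by (rule exp_of_nat_mult_le) auto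
  also have "\<dots> \<le> 1 + 1.16 * (1/4)" by (simp add: power2_eq_square power_divide divide_le_eq)
  finally show "exp (1/4 :: real) \<le> 1 + 1.16 * (1/4)" .
qed simp

lemma exp_le_linear_on_0_29:
  fixes u :: real
  assumes "0 \<le> u" "u \<le> 0.29"
  shows "exp u \<le> 1 + 1.24 * u"
proof (rule exp_le_linear_of_endpoint[OF _ _ assms])
  have "exp (0.29 :: real) = exp (of_nat 32 * (0.29/32))" by simp
  also have "\<dots> \<le> (1 + 0.29/32 + (0.29/32)\<^sup>2) ^ 32" by (rule exp_of_nat_mult_le) auto
  also have "\<dots> \<le> 1 + 1.24 * 0.29" by (simp add: power2_eq_square power_divide divide_le_eq)
  finally show "exp (0.29 :: real) \<le> 1 + 1.24 * 0.29" .
qed simp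

lemma power2_norm_vec_eq_sum: "(norm x)\<^sup>2 = (\<Sum>j\<in>UNIV. (x $ j)\<^sup>2)" for x :: "real^'n"
  by (simp add: norm_vec_def L2_set_def sum_nonneg)

lemma norm_row_le_onorm:
  fixes A :: "real^'n^'m"
  shows "norm (row i A) \<le> onorm ((*v) A)"
proof -
  let ?r = "norm (A $ i)"
  have "?r\<^sup>2 = (A *v (A $ i)) $ i"
    unfolding power2_norm_vec_eq_sum by (simp add: matrix_vector_mult_def power2_eq_square)
  also have "\<dots> \<le> norm (A *v (A $ i))"
    by (metis component_le_norm_cart abs_ge_self order_trans)
  also have "\<dots> \<le> onorm ((*v) A) * ?r"
    by (rule onorm[OF matrix_vector_mul_bounded_linear])
  finally have "?r * ?r \<le> onorm ((*v) A) * ?r"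
    by (simp add: power2_eq_square)
  then have "?r \<le> onorm ((*v) A)"
    using onorm_pos_le[OF matrix_vector_mul_bounded_linear, of A]
    by (cases "?r = 0") (simp_all add: mult_le_cancel_right)
  then show ?thesis
    by (simp add: row_def)
qed

lemma sum_power2_row_le_onorm:
  fixes A :: "real^'n^'m"
  shows "(\<Sum>j\<in>J. (A $ i $ j)\<^sup>2) \<le> (onorm ((*v) A))\<^sup>2"
proof -
  have "(\<Sum>j\<in>J. (A $ i $ j)\<^sup>2) \<le> (norm (row i A))\<^sup>2"
    by (simp add: power2_norm_vec_eq_sum row_def sum_mono2)
  also have "\<dots> \<le> (onorm ((*v) A))\<^sup>2"
    by (simp add: norm_row_le_onorm power_mono)
  finally show ?thesis .
qed

lemma sum_power2_column_le_onorm: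
  fixes A :: "real^'n^'m"
  shows "(\<Sum>i\<in>I. (A $ i $ j)\<^sup>2) \<le> (onorm ((*v) A))\<^sup>2"
proof -
  have "(\<Sum>i\<in>I. (A $ i $ j)\<^sup>2) \<le> (norm (column j A))\<^sup>2"
    by (simp add: power2_norm_vec_eq_sum column_def sum_mono2)
  also have "\<dots> \<le> (onorm ((*v) A))\<^sup>2"
    by (simp add: norm_column_le_onorm power_mono)
  finally show ?thesis .
qed

lemma bilinear_sum_le:
  fixes b :: "'i \<Rightarrow> 'j \<Rightarrow> real"
  assumes b: "\<And>i j. i \<in> I \<Longrightarrow> j \<in> J \<Longrightarrow> 0 \<le> b i j"
    and x: "\<And>i. i \<in> I \<Longrightarrow> 0 \<le> x i \<and> x i \<le> 1"
    and y: "\<And>j. j \<in> J \<Longrightarrow> 0 \<le> y j \<and> y j \<le> 1"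
  shows "(\<Sum>i\<in>I. x i * (\<Sum>j\<in>J. b i j * y j)) \<le> (\<Sum>i\<in>I. \<Sum>j\<in>J. b i j)"
proof (rule sum_mono)
  fix i assume i: "i \<in> I"
  have "0 \<le> (\<Sum>j\<in>J. b i j * y j)"
    using b[OF i] y by (intro sum_nonneg) simp
  moreover have "(\<Sum>j\<in>J. b i j * y j) \<le> (\<Sum>j\<in>J. b i j)"
    using b[OF i] y by (intro sum_mono) (simp add: mult_left_le)
  ultimately show "x i * (\<Sum>j\<in>J. b i j * y j) \<le> (\<Sum>j\<in>J. b i j)"
    using x[OF i] by (meson mult_left_le_one_le order_trans)
qed

lemma sum_disjoint_le_sum_off_diagonal:
  fixes g :: "'i \<Rightarrow> 'i \<Rightarrow> real"
  assumes "finite I" "S \<subseteq> I" "T \<subseteq> I" "S \<inter> T = {}" "\<And>i j. 0 \<le> g i j"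
  shows "(\<Sum>i\<in>S. \<Sum>j\<in>T. g i j) \<le> (\<Sum>i\<in>I. \<Sum>j\<in>I - {i}. g i j)"
proof -
  have "(\<Sum>i\<in>S. \<Sum>j\<in>T. g i j) \<le> (\<Sum>i\<in>S. \<Sum>j\<in>I - {i}. g i j)"
    using assms by (intro sum_mono sum_mono2) auto
  also have "\<dots> \<le> (\<Sum>i\<in>I. \<Sum>j\<in>I - {i}. g i j)"
    using assms by (intro sum_mono2 sum_nonneg) auto
  finally show ?thesis .
qed

lemma borel_measurable_fst [measurable]:
  "fst \<in> borel_measurable (borel :: ('a::second_countable_topology \<times> 'b::second_countable_topology) measure)"
  unfolding borel_prod[symmetric] by (rule measurable_fst)

lemma borel_measurable_snd [measurable]:
  "snd \<in> borel_measurable (borel :: ('a::second_countable_topology \<times> 'b::second_countable_topology) measure)"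
  unfolding borel_prod[symmetric] by (rule measurable_snd)

lemma (in prob_space) integrable_bernoulli:
  fixes Z :: "'a \<Rightarrow> real"
  assumes "Z \<in> borel_measurable M" and "\<And>\<omega>. \<omega> \<in> space M \<Longrightarrow> Z \<omega> \<in> {0, 1}"
  shows "integrable M Z"
proof (rule integrable_const_bound[where B=1])
  show "AE \<omega> in M. norm (Z \<omega>) \<le> 1"
    using assms(2) by (intro AE_I2) fastforce
qed fact

lemma (in prob_space) expectation_bernoulli_bounds:
  fixes Z :: "'a \<Rightarrow> real"
  assumes "Z \<in> borel_measurable M" and "\<And>\<omega>. \<omega> \<in> space M \<Longrightarrow> Z \<omega> \<in> {0, 1}"
  shows "0 \<le> expectation Z" and "expectation Z \<le> 1"
proof -
  have Z: "0 \<le> Z \<omega> \<and> Z \<omega> \<le> 1" if "\<omega> \<in> space M" for \<omega>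
    using assms(2)[OF that] by auto
  then show "0 \<le> expectation Z"
    by (intro integral_nonneg_AE AE_I2) simp
  have "integrable M Z"
    using assms by (rule integrable_bernoulli)
  then have "expectation Z \<le> expectation (\<lambda>_. 1)"
    by (rule integral_mono_AE) (use Z in auto)
  then show "expectation Z \<le> 1"
    by (simp add: prob_space)
qed

lemma (in prob_space) integrable_exp_sum_bernoulli:
  fixes Z :: "'i \<Rightarrow> 'a \<Rightarrow> real"
  assumes "\<And>i. i \<in> I \<Longrightarrow> Z i \<in> borel_measurable M"
    and "\<And>i \<omega>. i \<in> I \<Longrightarrow> \<omega> \<in> space M \<Longrightarrow> Z i \<omega> \<in> {0, 1}"
  shows "integrable M (\<lambda>\<omega>. exp (\<Sum>i\<in>I. t i * Z i \<omega>))"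
proof (rule integrable_const_bound[where B="exp (\<Sum>i\<in>I. \<bar>t i\<bar>)"])
  have "(\<Sum>i\<in>I. t i * Z i \<omega>) \<le> (\<Sum>i\<in>I. \<bar>t i\<bar>)" if "\<omega> \<in> space M" for \<omega>
    using assms(2)[OF _ that] by (intro sum_mono) force
  then show "AE \<omega> in M. norm (exp (\<Sum>i\<in>I. t i * Z i \<omega>)) \<le> exp (\<Sum>i\<in>I. \<bar>t i\<bar>)"
    by (intro AE_I2) simp
qed (use assms(1) in measurable)

lemma (in prob_space) indep_bernoulli_mgf_le:
  fixes Z :: "'i \<Rightarrow> 'a \<Rightarrow> real"
  assumes "finite I" and indep: "indep_vars (\<lambda>_. borel) Z I"
    and bernoulli: "\<And>i \<omega>. i \<in> I \<Longrightarrow> \<omega> \<in> space M \<Longrightarrow> Z i \<omega> \<in> {0, 1}"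
    and t: "\<And>i. i \<in> I \<Longrightarrow> 0 \<le> t i \<and> t i \<le> L"
    and exp_le: "\<And>u. 0 \<le> u \<Longrightarrow> u \<le> L \<Longrightarrow> exp u \<le> 1 + c * u"
  shows "(\<integral>\<omega>. exp (\<Sum>i\<in>I. t i * Z i \<omega>) \<partial>M) \<le> exp (c * (\<Sum>i\<in>I. t i * expectation (Z i)))"
proof -
  have Z_measurable[measurable]: "Z i \<in> borel_measurable M" if "i \<in> I" for i
    using indep that by (auto simp: indep_vars_def)
  have EZ: "0 \<le> expectation (Z i)" if "i \<in> I" for i
    using Z_measurable[OF that] bernoulli[OF that] by (rule expectation_bernoulli_bounds(1))
  have factor_mgf: "(\<integral>\<omega>. exp (t i * Z i \<omega>) \<partial>M) = 1 + (exp (t i) - 1) * expectation (Z i)"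
    if i: "i \<in> I" for i
  proof -
    have "exp (t i * Z i \<omega>) = 1 + (exp (t i) - 1) * Z i \<omega>" if "\<omega> \<in> space M" for \<omega>
      using bernoulli[OF i that] by auto
    then have "(\<integral>\<omega>. exp (t i * Z i \<omega>) \<partial>M) = (\<integral>\<omega>. 1 + (exp (t i) - 1) * Z i \<omega> \<partial>M)"
      by (intro Bochner_Integration.integral_cong) auto
    also have "\<dots> = 1 + (exp (t i) - 1) * expectation (Z i)"
      using integrable_bernoulli[OF Z_measurable[OF i] bernoulli[OF i]] by (simp add: prob_space)
    finally show ?thesis .
  qed
  have "(\<integral>\<omega>. exp (\<Sum>i\<in>I. t i * Z i \<omega>) \<partial>M) = (\<integral>\<omega>. (\<Prod>i\<in>I. exp (t i * Z i \<omega>)) \<partial>M)"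
    by (simp add: exp_sum \<open>finite I\<close>)
  also have "\<dots> = (\<Prod>i\<in>I. \<integral>\<omega>. exp (t i * Z i \<omega>) \<partial>M)"
  proof (rule indep_vars_lebesgue_integral[OF \<open>finite I\<close>])
    show "indep_vars (\<lambda>_. borel) (\<lambda>i \<omega>. exp (t i * Z i \<omega>)) I"
      by (rule indep_vars_compose2[OF indep]) measurable
    show "integrable M (\<lambda>\<omega>. exp (t i * Z i \<omega>))" if "i \<in> I" for i
      using integrable_exp_sum_bernoulli[of "{i}" Z t] bernoulli that by (simp add: Z_measurable)
  qed
  also have "\<dots> \<le> (\<Prod>i\<in>I. exp (c * (t i * expectation (Z i))))"
  proof (rule prod_mono, safe)
    fix i assume i: "i \<in> I"
    show "0 \<le> \<integral>\<omega>. exp (t i * Z i \<omega>) \<partial>M"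
      by simp
    have "(exp (t i) - 1) * expectation (Z i) \<le> (c * t i) * expectation (Z i)"
      using exp_le[of "t i"] t[OF i] EZ[OF i] by (intro mult_right_mono) auto
    moreover have "1 + c * (t i * expectation (Z i)) \<le> exp (c * (t i * expectation (Z i)))"
      by (rule exp_ge_add_one_self)
    ultimately show "(\<integral>\<omega>. exp (t i * Z i \<omega>) \<partial>M) \<le> exp (c * (t i * expectation (Z i)))"
      unfolding factor_mgf[OF i] mult.assoc by linarith
  qed
  also have "\<dots> = exp (c * (\<Sum>i\<in>I. t i * expectation (Z i)))"
    by (simp add: exp_sum \<open>finite I\<close> sum_distrib_left)
  finally show ?thesis .
qed

lemma (in prob_space) distr_pair_eq_if_indep_set_vimage:
  assumes [measurable]: "X \<in> measurable M S" "Y \<in> measurable M T"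
    and indep: "indep_set (sets (vimage_algebra (space M) X S)) (sets (vimage_algebra (space M) Y T))"
  shows "distr M (S \<Otimes>\<^sub>M T) (\<lambda>\<omega>. (X \<omega>, Y \<omega>)) = distr M S X \<Otimes>\<^sub>M distr M T Y"
proof -
  interpret PX: prob_space "distr M S X" by (rule prob_space_distr) simp
  interpret PY: prob_space "distr M T Y" by (rule prob_space_distr) simp
  show ?thesis
  proof (rule pair_measure_eqI[symmetric])
    fix A B assume AB: "A \<in> sets (distr M S X)" "B \<in> sets (distr M T Y)"
    have "X -` A \<inter> space M \<in> sets (vimage_algebra (space M) X S)"
      "Y -` B \<inter> space M \<in> sets (vimage_algebra (space M) Y T)"
      using AB by (auto intro!: in_vimage_algebra)
    then have "prob ((X -` A \<inter> space M) \<inter> (Y -` B \<inter> space M)) = prob (X -` A \<inter> space M) * prob (Y -` B \<inter> space M)"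
      by (rule indep_setD[OF indep])
    moreover have "(\<lambda>\<omega>. (X \<omega>, Y \<omega>)) -` (A \<times> B) \<inter> space M = (X -` A \<inter> space M) \<inter> (Y -` B \<inter> space M)"
      by auto
    ultimately show "emeasure (distr M S X) A * emeasure (distr M T Y) B
        = emeasure (distr M (S \<Otimes>\<^sub>M T) (\<lambda>\<omega>. (X \<omega>, Y \<omega>))) (A \<times> B)"
      using AB by (simp add: emeasure_distr emeasure_eq_measure ennreal_mult)
  qed (auto intro: PX.sigma_finite_measure PY.sigma_finite_measure)
qed

(* Boundedness is only required on the ranges of X and Y, which is all that integrands built
   from {0, 1}-valued real variables satisfy. *)
lemma (in prob_space) integral_indep_pair_eq_iterated:
  fixes h :: "'b \<times> 'c \<Rightarrow> real"
  assumes [measurable]: "X \<in> measurable M S" "Y \<in> measurable M T"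
    and distr_pair: "distr M (S \<Otimes>\<^sub>M T) (\<lambda>\<omega>. (X \<omega>, Y \<omega>)) = distr M S X \<Otimes>\<^sub>M distr M T Y"
    and [measurable]: "h \<in> borel_measurable (S \<Otimes>\<^sub>M T)"
    and bounded: "\<And>\<omega> \<omega>'. \<omega> \<in> space M \<Longrightarrow> \<omega>' \<in> space M \<Longrightarrow> \<bar>h (X \<omega>, Y \<omega>')\<bar> \<le> K"
  shows "(\<integral>\<omega>. h (X \<omega>, Y \<omega>) \<partial>M) = (\<integral>\<omega>. (\<integral>\<omega>'. h (X \<omega>, Y \<omega>') \<partial>M) \<partial>M)"
    and "integrable M (\<lambda>\<omega>. \<integral>\<omega>'. h (X \<omega>, Y \<omega>') \<partial>M)"
proof -
  interpret MM: pair_prob_space M M ..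
  interpret PY: prob_space "distr M T Y" by (rule prob_space_distr) simp
  have "integrable (M \<Otimes>\<^sub>M M) (\<lambda>z. h (X (fst z), Y (snd z)))"
    by (rule MM.integrable_const_bound[where B=K]) (auto simp: space_pair_measure bounded)
  then have int: "integrable (M \<Otimes>\<^sub>M M) (\<lambda>(\<omega>, \<omega>'). h (X \<omega>, Y \<omega>'))"
    by (simp add: case_prod_beta')
  have "(\<integral>\<omega>. h (X \<omega>, Y \<omega>) \<partial>M) = (\<integral>z. h z \<partial>distr M (S \<Otimes>\<^sub>M T) (\<lambda>\<omega>. (X \<omega>, Y \<omega>)))"
    by (simp add: integral_distr)
  also have "\<dots> = (\<integral>z. h z \<partial>distr (M \<Otimes>\<^sub>M M) (S \<Otimes>\<^sub>M T) (\<lambda>(\<omega>, \<omega>'). (X \<omega>, Y \<omega>')))"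
    unfolding distr_pair by (subst pair_measure_distr) (auto intro: PY.sigma_finite_measure)
  also have "\<dots> = (\<integral>z. h (X (fst z), Y (snd z)) \<partial>(M \<Otimes>\<^sub>M M))"
    by (subst integral_distr) (auto simp: case_prod_beta')
  also have "\<dots> = (\<integral>\<omega>. (\<integral>\<omega>'. h (X \<omega>, Y \<omega>') \<partial>M) \<partial>M)"
    using MM.integral_fst'[OF int] by (simp add: case_prod_beta')
  finally show "(\<integral>\<omega>. h (X \<omega>, Y \<omega>) \<partial>M) = (\<integral>\<omega>. (\<integral>\<omega>'. h (X \<omega>, Y \<omega>') \<partial>M) \<partial>M)" .
  show "integrable M (\<lambda>\<omega>. \<integral>\<omega>'. h (X \<omega>, Y \<omega>') \<partial>M)"
    using MM.integrable_fst'[OF int] by simp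
qed

lemma (in prob_space) real_cond_exp_indep_freeze:
  fixes F :: "'b \<times> 'c \<Rightarrow> real"
  assumes W[measurable]: "W \<in> measurable M N" and [measurable]: "\<Gamma> \<in> measurable M P"
    and indep: "indep_set (sets (vimage_algebra (space M) W N)) (sets (vimage_algebra (space M) \<Gamma> P))"
    and [measurable]: "F \<in> borel_measurable (N \<Otimes>\<^sub>M P)"
    and bounded: "\<And>\<omega> \<omega>'. \<omega> \<in> space M \<Longrightarrow> \<omega>' \<in> space M \<Longrightarrow> \<bar>F (W \<omega>, \<Gamma> \<omega>')\<bar> \<le> K"
  shows "AE \<omega> in M. real_cond_exp M (vimage_algebra (space M) W N) (\<lambda>\<omega>. F (W \<omega>, \<Gamma> \<omega>)) \<omega>
    = (\<integral>\<omega>'. F (W \<omega>, \<Gamma> \<omega>') \<partial>M)"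
proof -
  let ?G = "vimage_algebra (space M) W N"
  define \<phi> where "\<phi> w = (\<integral>\<omega>'. F (w, \<Gamma> \<omega>') \<partial>M)" for w
  have W_space: "W \<in> space M \<rightarrow> space N"
    using W by (auto intro: measurable_space)
  have sets_G: "sets ?G = {W -` B \<inter> space M | B. B \<in> sets N}"
    using W_space by (rule sets_vimage_algebra2)
  have "subalgebra M ?G"
    unfolding subalgebra_def sets_G by auto
  then interpret G: finite_measure_subalgebra M ?G
    by unfold_locales
  have distr_pair: "distr M (N \<Otimes>\<^sub>M P) (\<lambda>\<omega>. (W \<omega>, \<Gamma> \<omega>)) = distr M N W \<Otimes>\<^sub>M distr M P \<Gamma>"
    by (rule distr_pair_eq_if_indep_set_vimage) (simp_all add: indep)
  have [measurable]: "\<phi> \<in> borel_measurable N"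
    unfolding \<phi>_def by measurable
  show ?thesis
    unfolding \<phi>_def[symmetric]
  proof (rule G.real_cond_exp_charact)
    fix A assume "A \<in> sets ?G"
    then obtain B where B[measurable]: "B \<in> sets N" and A: "A = W -` B \<inter> space M"
      unfolding sets_G by blast
    define h where "h z = indicator B (fst z) * F z" for z
    have [measurable]: "h \<in> borel_measurable (N \<Otimes>\<^sub>M P)"
      unfolding h_def by measurable
    have h_bounded: "\<bar>h (W \<omega>, \<Gamma> \<omega>')\<bar> \<le> K" if "\<omega> \<in> space M" "\<omega>' \<in> space M" for \<omega> \<omega>'
      using bounded[OF that] that by (auto simp: h_def indicator_def)
    have "(\<integral>\<omega>\<in>A. F (W \<omega>, \<Gamma> \<omega>) \<partial>M) = (\<integral>\<omega>. h (W \<omega>, \<Gamma> \<omega>) \<partial>M)"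
      unfolding set_lebesgue_integral_def h_def A
      by (intro Bochner_Integration.integral_cong) (auto simp: indicator_def)
    also have "\<dots> = (\<integral>\<omega>. (\<integral>\<omega>'. h (W \<omega>, \<Gamma> \<omega>') \<partial>M) \<partial>M)"
      by (rule integral_indep_pair_eq_iterated(1)[where h=h, OF _ _ distr_pair _ h_bounded]) simp_all
    also have "\<dots> = (\<integral>\<omega>\<in>A. \<phi> (W \<omega>) \<partial>M)"
      unfolding set_lebesgue_integral_def h_def A \<phi>_def
      by (intro Bochner_Integration.integral_cong) (auto simp: indicator_def)
    finally show "(\<integral>\<omega>\<in>A. F (W \<omega>, \<Gamma> \<omega>) \<partial>M) = (\<integral>\<omega>\<in>A. \<phi> (W \<omega>) \<partial>M)" .
  next
    show "integrable M (\<lambda>\<omega>. F (W \<omega>, \<Gamma> \<omega>))"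
      by (rule integrable_const_bound[where B=K]) (simp_all add: bounded)
    show "integrable M (\<lambda>\<omega>. \<phi> (W \<omega>))"
      unfolding \<phi>_def by (rule integral_indep_pair_eq_iterated(2)[where h=F, OF _ _ distr_pair _ bounded]) simp_all
    show "(\<lambda>\<omega>. \<phi> (W \<omega>)) \<in> borel_measurable ?G"
      using measurable_vimage_algebra1[OF W_space] by measurable
  qed
qed

lemma (in prob_space) indep_vars_pair_components:
  fixes U :: "'i \<Rightarrow> 'a \<Rightarrow> 'b::second_countable_topology" and V :: "'i \<Rightarrow> 'a \<Rightarrow> 'c::second_countable_topology"
  assumes "indep_vars (\<lambda>_. borel) (\<lambda>i \<omega>. (U i \<omega>, V i \<omega>)) I"
  shows "indep_vars (\<lambda>_. borel) U I" and "indep_vars (\<lambda>_. borel) V I"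
proof -
  have "indep_vars (\<lambda>_. borel) (\<lambda>i \<omega>. fst (U i \<omega>, V i \<omega>)) I"
    by (rule indep_vars_compose2[OF assms]) measurable
  then show "indep_vars (\<lambda>_. borel) U I"
    by simp
  have "indep_vars (\<lambda>_. borel) (\<lambda>i \<omega>. snd (U i \<omega>, V i \<omega>)) I"
    by (rule indep_vars_compose2[OF assms]) measurable
  then show "indep_vars (\<lambda>_. borel) V I"
    by simp
qed

lemma (in prob_space) integral_disjoint_blocks_eq_iterated:
  fixes g :: "('i \<Rightarrow> 'b) \<times> ('i \<Rightarrow> 'b) \<Rightarrow> real"
  assumes indep: "indep_vars M' Z I" and "S \<inter> T = {}" "S \<subseteq> I" "T \<subseteq> I"
    and "g \<in> borel_measurable (PiM S M' \<Otimes>\<^sub>M PiM T M')"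
    and "\<And>\<omega> \<omega>'. \<omega> \<in> space M \<Longrightarrow> \<omega>' \<in> space M \<Longrightarrow>
      \<bar>g (restrict (\<lambda>i. Z i \<omega>) S, restrict (\<lambda>j. Z j \<omega>') T)\<bar> \<le> K"
  shows "(\<integral>\<omega>. g (restrict (\<lambda>i. Z i \<omega>) S, restrict (\<lambda>j. Z j \<omega>) T) \<partial>M)
      = (\<integral>\<omega>. (\<integral>\<omega>'. g (restrict (\<lambda>i. Z i \<omega>) S, restrict (\<lambda>j. Z j \<omega>') T) \<partial>M) \<partial>M)"
    and "integrable M (\<lambda>\<omega>. \<integral>\<omega>'. g (restrict (\<lambda>i. Z i \<omega>) S, restrict (\<lambda>j. Z j \<omega>') T) \<partial>M)"
proof -
  have "indep_var (PiM S M') (\<lambda>\<omega>. restrict (\<lambda>i. Z i \<omega>) S) (PiM T M') (\<lambda>\<omega>. restrict (\<lambda>j. Z j \<omega>) T)"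
    by (rule indep_var_restrict[OF indep assms(2-4)])
  note blocks = this[unfolded indep_var_distribution_eq]
  show "(\<integral>\<omega>. g (restrict (\<lambda>i. Z i \<omega>) S, restrict (\<lambda>j. Z j \<omega>) T) \<partial>M)
      = (\<integral>\<omega>. (\<integral>\<omega>'. g (restrict (\<lambda>i. Z i \<omega>) S, restrict (\<lambda>j. Z j \<omega>') T) \<partial>M) \<partial>M)"
    using blocks by (intro integral_indep_pair_eq_iterated(1)[where h=g, OF _ _ _ assms(5,6)]) simp_all
  show "integrable M (\<lambda>\<omega>. \<integral>\<omega>'. g (restrict (\<lambda>i. Z i \<omega>) S, restrict (\<lambda>j. Z j \<omega>') T) \<partial>M)"
    using blocks by (intro integral_indep_pair_eq_iterated(2)[where h=g, OF _ _ _ assms(5,6)]) simp_all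
qed

lemma (in prob_space) bernoulli_mgf_bilinear_le:
  fixes U :: "'i \<Rightarrow> 'a \<Rightarrow> real" and b :: "'i \<Rightarrow> 'j \<Rightarrow> real"
  assumes "finite S" and indep: "indep_vars (\<lambda>_. borel) U S"
    and U01: "\<And>i \<omega>. i \<in> S \<Longrightarrow> \<omega> \<in> space M \<Longrightarrow> U i \<omega> \<in> {0, 1}"
    and b: "\<And>i j. 0 \<le> b i j" and "0 \<le> \<tau>"
    and rows: "\<And>i. i \<in> S \<Longrightarrow> \<tau> * (\<Sum>j\<in>T. b i j) \<le> 1/4"
    and w: "\<And>j. j \<in> T \<Longrightarrow> 0 \<le> w j \<and> w j \<le> 1"
  shows "(\<integral>\<omega>. exp (\<tau> * (\<Sum>i\<in>S. U i \<omega> * (\<Sum>j\<in>T. b i j * w j))) \<partial>M)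
    \<le> exp (\<Sum>j\<in>T. 1.16 * \<tau> * (\<Sum>i\<in>S. b i j * expectation (U i)) * w j)"
proof -
  define t where "t i = \<tau> * (\<Sum>j\<in>T. b i j * w j)" for i
  have t: "0 \<le> t i \<and> t i \<le> 1/4" if "i \<in> S" for i
  proof
    show "0 \<le> t i"
      using b w \<open>0 \<le> \<tau>\<close> unfolding t_def by (simp add: sum_nonneg)
    have "(\<Sum>j\<in>T. b i j * w j) \<le> (\<Sum>j\<in>T. b i j)"
      using b w by (intro sum_mono) (simp add: mult_left_le)
    then show "t i \<le> 1/4"
      unfolding t_def using rows[OF that] \<open>0 \<le> \<tau>\<close> by (meson mult_left_mono order_trans)
  qed
  have "(\<integral>\<omega>. exp (\<tau> * (\<Sum>i\<in>S. U i \<omega> * (\<Sum>j\<in>T. b i j * w j))) \<partial>M)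
      = (\<integral>\<omega>. exp (\<Sum>i\<in>S. t i * U i \<omega>) \<partial>M)"
    by (simp add: t_def sum_distrib_left mult_ac)
  also have "\<dots> \<le> exp (1.16 * (\<Sum>i\<in>S. t i * expectation (U i)))"
    by (rule indep_bernoulli_mgf_le[OF \<open>finite S\<close> indep U01 t exp_le_linear_on_quarter])
  also have "\<dots> = exp (\<Sum>j\<in>T. 1.16 * \<tau> * (\<Sum>i\<in>S. b i j * expectation (U i)) * w j)"
    by (simp add: t_def sum_distrib_left sum_distrib_right sum_divide_distrib mult_ac sum.swap[of _ S T])
  finally show ?thesis .
qed

lemma (in prob_space) integral_exp_bilinear_eq_iterated:
  fixes U V :: "'i \<Rightarrow> 'a \<Rightarrow> real" and b :: "'i \<Rightarrow> 'i \<Rightarrow> real"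
  assumes "S \<inter> T = {}"
    and indep: "indep_vars (\<lambda>_. borel) (\<lambda>i \<omega>. (U i \<omega>, V i \<omega>)) (S \<union> T)"
    and U01: "\<And>i \<omega>. i \<in> S \<Longrightarrow> \<omega> \<in> space M \<Longrightarrow> U i \<omega> \<in> {0, 1}"
    and V01: "\<And>j \<omega>. j \<in> T \<Longrightarrow> \<omega> \<in> space M \<Longrightarrow> V j \<omega> \<in> {0, 1}"
    and b: "\<And>i j. 0 \<le> b i j" and "0 \<le> \<tau>"
  shows "(\<integral>\<omega>. exp (\<tau> * (\<Sum>i\<in>S. U i \<omega> * (\<Sum>j\<in>T. b i j * V j \<omega>))) \<partial>M)
      = (\<integral>\<omega>. (\<integral>\<omega>'. exp (\<tau> * (\<Sum>i\<in>S. U i \<omega>' * (\<Sum>j\<in>T. b i j * V j \<omega>))) \<partial>M) \<partial>M)"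
    and "integrable M (\<lambda>\<omega>. \<integral>\<omega>'. exp (\<tau> * (\<Sum>i\<in>S. U i \<omega>' * (\<Sum>j\<in>T. b i j * V j \<omega>))) \<partial>M)"
proof -
  define g where "g z = exp (\<tau> * (\<Sum>i\<in>S. fst (snd z i) * (\<Sum>j\<in>T. b i j * snd (fst z j))))"
    for z :: "('i \<Rightarrow> real \<times> real) \<times> ('i \<Rightarrow> real \<times> real)"
  have g_measurable: "g \<in> borel_measurable (PiM T (\<lambda>_. borel) \<Otimes>\<^sub>M PiM S (\<lambda>_. borel))"
    unfolding g_def by measurable
  have g_bounded: "\<bar>g (restrict (\<lambda>j. (U j \<omega>, V j \<omega>)) T, restrict (\<lambda>i. (U i \<omega>', V i \<omega>')) S)\<bar>
      \<le> exp (\<tau> * (\<Sum>i\<in>S. \<Sum>j\<in>T. b i j))" if "\<omega> \<in> space M" "\<omega>' \<in> space M" for \<omega> \<omega>'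
  proof -
    have "(\<Sum>i\<in>S. U i \<omega>' * (\<Sum>j\<in>T. b i j * V j \<omega>)) \<le> (\<Sum>i\<in>S. \<Sum>j\<in>T. b i j)"
      using b U01[OF _ that(2)] V01[OF _ that(1)] by (intro bilinear_sum_le) force+
    then show ?thesis
      using \<open>0 \<le> \<tau>\<close> by (simp add: g_def mult_left_mono cong: sum.cong)
  qed
  note iterated = integral_disjoint_blocks_eq_iterated[OF indep _ _ _ g_measurable g_bounded]
  show "(\<integral>\<omega>. exp (\<tau> * (\<Sum>i\<in>S. U i \<omega> * (\<Sum>j\<in>T. b i j * V j \<omega>))) \<partial>M)
      = (\<integral>\<omega>. (\<integral>\<omega>'. exp (\<tau> * (\<Sum>i\<in>S. U i \<omega>' * (\<Sum>j\<in>T. b i j * V j \<omega>))) \<partial>M) \<partial>M)"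
    using iterated(1) \<open>S \<inter> T = {}\<close> by (simp add: g_def Int_commute cong: sum.cong)
  show "integrable M (\<lambda>\<omega>. \<integral>\<omega>'. exp (\<tau> * (\<Sum>i\<in>S. U i \<omega>' * (\<Sum>j\<in>T. b i j * V j \<omega>))) \<partial>M)"
    using iterated(2) \<open>S \<inter> T = {}\<close> by (simp add: g_def Int_commute cong: sum.cong)
qed

lemma (in prob_space) decoupled_bernoulli_mgf_le:
  fixes U V :: "'i \<Rightarrow> 'a \<Rightarrow> real" and b :: "'i \<Rightarrow> 'i \<Rightarrow> real"
  assumes "finite S" "finite T" "S \<inter> T = {}"
    and indep: "indep_vars (\<lambda>_. borel) (\<lambda>i \<omega>. (U i \<omega>, V i \<omega>)) (S \<union> T)"
    and U01: "\<And>i \<omega>. i \<in> S \<Longrightarrow> \<omega> \<in> space M \<Longrightarrow> U i \<omega> \<in> {0, 1}"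
    and V01: "\<And>j \<omega>. j \<in> T \<Longrightarrow> \<omega> \<in> space M \<Longrightarrow> V j \<omega> \<in> {0, 1}"
    and b: "\<And>i j. 0 \<le> b i j" and "0 \<le> \<tau>"
    and rows: "\<And>i. i \<in> S \<Longrightarrow> \<tau> * (\<Sum>j\<in>T. b i j) \<le> 1/4"
    and columns: "\<And>j. j \<in> T \<Longrightarrow> \<tau> * (\<Sum>i\<in>S. b i j) \<le> 1/4"
  shows "(\<integral>\<omega>. exp (\<tau> * (\<Sum>i\<in>S. U i \<omega> * (\<Sum>j\<in>T. b i j * V j \<omega>))) \<partial>M)
    \<le> exp (1.44 * \<tau> * (\<Sum>i\<in>S. \<Sum>j\<in>T. b i j * expectation (U i) * expectation (V j)))"
proof -
  have indep_U: "indep_vars (\<lambda>_. borel) U S" and indep_V: "indep_vars (\<lambda>_. borel) V T"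
    using indep_vars_pair_components[OF indep] by (auto intro: indep_vars_subset)
  have [measurable]: "U i \<in> borel_measurable M" if "i \<in> S" for i
    using indep_U that by (auto simp: indep_vars_def)
  have [measurable]: "V j \<in> borel_measurable M" if "j \<in> T" for j
    using indep_V that by (auto simp: indep_vars_def)
  have V_unit: "0 \<le> V j \<omega> \<and> V j \<omega> \<le> 1" if "j \<in> T" "\<omega> \<in> space M" for j \<omega>
    using V01[OF that] by auto
  have EU: "0 \<le> expectation (U i) \<and> expectation (U i) \<le> 1" if "i \<in> S" for i
    using expectation_bernoulli_bounds[of "U i"] U01 that by simp
  have EV: "0 \<le> expectation (V j)" if "j \<in> T" for j
    using expectation_bernoulli_bounds[of "V j"] V01 that by simp
  define d where "d j = 1.16 * \<tau> * (\<Sum>i\<in>S. b i j * expectation (U i))" for j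
  have d: "0 \<le> d j \<and> d j \<le> 0.29" if "j \<in> T" for j
  proof
    show "0 \<le> d j"
      using b EU \<open>0 \<le> \<tau>\<close> unfolding d_def by (simp add: sum_nonneg)
    have "(\<Sum>i\<in>S. b i j * expectation (U i)) \<le> (\<Sum>i\<in>S. b i j)"
      using b EU by (intro sum_mono) (simp add: mult_left_le)
    then have "\<tau> * (\<Sum>i\<in>S. b i j * expectation (U i)) \<le> 1/4"
      using columns[OF that] \<open>0 \<le> \<tau>\<close> by (meson mult_left_mono order_trans)
    then show "d j \<le> 0.29"
      unfolding d_def by simp
  qed
  note iterated = integral_exp_bilinear_eq_iterated[OF \<open>S \<inter> T = {}\<close> indep U01 V01 b \<open>0 \<le> \<tau>\<close>]
  have "(\<integral>\<omega>. exp (\<tau> * (\<Sum>i\<in>S. U i \<omega> * (\<Sum>j\<in>T. b i j * V j \<omega>))) \<partial>M)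
      = (\<integral>\<omega>. (\<integral>\<omega>'. exp (\<tau> * (\<Sum>i\<in>S. U i \<omega>' * (\<Sum>j\<in>T. b i j * V j \<omega>))) \<partial>M) \<partial>M)"
    by (rule iterated(1))
  also have "\<dots> \<le> (\<integral>\<omega>. exp (\<Sum>j\<in>T. d j * V j \<omega>) \<partial>M)"
  proof (rule integral_mono)
    show "integrable M (\<lambda>\<omega>. \<integral>\<omega>'. exp (\<tau> * (\<Sum>i\<in>S. U i \<omega>' * (\<Sum>j\<in>T. b i j * V j \<omega>))) \<partial>M)"
      by (rule iterated(2))
    show "integrable M (\<lambda>\<omega>. exp (\<Sum>j\<in>T. d j * V j \<omega>))"
      using V01 by (intro integrable_exp_sum_bernoulli) simp_all
    show "(\<integral>\<omega>'. exp (\<tau> * (\<Sum>i\<in>S. U i \<omega>' * (\<Sum>j\<in>T. b i j * V j \<omega>))) \<partial>M) \<le> exp (\<Sum>j\<in>T. d j * V j \<omega>)"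
      if "\<omega> \<in> space M" for \<omega>
      using bernoulli_mgf_bilinear_le[OF \<open>finite S\<close> indep_U U01 b \<open>0 \<le> \<tau>\<close> rows, where w="\<lambda>j. V j \<omega>"] V_unit that
      by (simp add: d_def)
  qed
  also have "\<dots> \<le> exp (1.24 * (\<Sum>j\<in>T. d j * expectation (V j)))"
    by (rule indep_bernoulli_mgf_le[OF \<open>finite T\<close> indep_V V01 d exp_le_linear_on_0_29])
  also have "\<dots> = exp (1.24 * 1.16 * \<tau> * (\<Sum>i\<in>S. \<Sum>j\<in>T. b i j * expectation (U i) * expectation (V j)))"
    by (simp add: d_def sum_distrib_left sum_distrib_right sum_divide_distrib sum.swap[of _ S T] mult_ac)
  also have "\<dots> \<le> exp (1.44 * \<tau> * (\<Sum>i\<in>S. \<Sum>j\<in>T. b i j * expectation (U i) * expectation (V j)))"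
    using b EU EV \<open>0 \<le> \<tau>\<close> by (simp add: mult_right_mono sum_nonneg)
  finally show ?thesis .
qed

lemma (in prob_space) decoupled_matrix_bernoulli_mgf_le:
  fixes A :: "real^'n^'n" and U V :: "'n \<Rightarrow> 'a \<Rightarrow> real"
  assumes "S \<inter> T = {}"
    and indep: "indep_vars (\<lambda>_. borel) (\<lambda>i \<omega>. (U i \<omega>, V i \<omega>)) UNIV"
    and U01: "\<And>i \<omega>. \<omega> \<in> space M \<Longrightarrow> U i \<omega> \<in> {0, 1}"
    and V01: "\<And>j \<omega>. \<omega> \<in> space M \<Longrightarrow> V j \<omega> \<in> {0, 1}"
    and "0 \<le> \<tau>" and \<tau>_le: "4 * \<tau> * (onorm ((*v) A))\<^sup>2 \<le> 1"
  shows "(\<integral>\<omega>. exp (\<tau> * (\<Sum>i\<in>S. U i \<omega> * (\<Sum>j\<in>T. (A $ i $ j)\<^sup>2 * V j \<omega>))) \<partial>M)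
    \<le> exp (1.44 * \<tau> * (\<Sum>i\<in>UNIV. \<Sum>j\<in>UNIV - {i}. (A $ i $ j)\<^sup>2 * expectation (U i) * expectation (V j)))"
proof -
  have rows: "\<tau> * (\<Sum>j\<in>J. (A $ i $ j)\<^sup>2) \<le> 1/4" for i J
  proof -
    have "\<tau> * (\<Sum>j\<in>J. (A $ i $ j)\<^sup>2) \<le> \<tau> * (onorm ((*v) A))\<^sup>2"
      using \<open>0 \<le> \<tau>\<close> by (intro mult_left_mono sum_power2_row_le_onorm)
    with \<tau>_le show ?thesis by simp
  qed
  have columns: "\<tau> * (\<Sum>i\<in>I. (A $ i $ j)\<^sup>2) \<le> 1/4" for j I
  proof -
    have "\<tau> * (\<Sum>i\<in>I. (A $ i $ j)\<^sup>2) \<le> \<tau> * (onorm ((*v) A))\<^sup>2"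
      using \<open>0 \<le> \<tau>\<close> by (intro mult_left_mono sum_power2_column_le_onorm)
    with \<tau>_le show ?thesis by simp
  qed
  have U_unit: "0 \<le> U i \<omega>" and V_unit: "0 \<le> V i \<omega>" if "\<omega> \<in> space M" for i \<omega>
    using U01[OF that, of i] V01[OF that, of i] by auto
  have EU: "0 \<le> expectation (U i)" and EV: "0 \<le> expectation (V i)" for i
    using U_unit V_unit by (simp_all add: integral_nonneg_AE)
  have "(\<integral>\<omega>. exp (\<tau> * (\<Sum>i\<in>S. U i \<omega> * (\<Sum>j\<in>T. (A $ i $ j)\<^sup>2 * V j \<omega>))) \<partial>M)
      \<le> exp (1.44 * \<tau> * (\<Sum>i\<in>S. \<Sum>j\<in>T. (A $ i $ j)\<^sup>2 * expectation (U i) * expectation (V j)))"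
    using indep_vars_subset[OF indep] U01 V01 rows columns \<open>S \<inter> T = {}\<close> \<open>0 \<le> \<tau>\<close>
    by (intro decoupled_bernoulli_mgf_le) auto
  also have "\<dots> \<le> exp (1.44 * \<tau> * (\<Sum>i\<in>UNIV. \<Sum>j\<in>UNIV - {i}. (A $ i $ j)\<^sup>2 * expectation (U i) * expectation (V j)))"
    using sum_disjoint_le_sum_off_diagonal[of UNIV S T] \<open>S \<inter> T = {}\<close> \<open>0 \<le> \<tau>\<close> EU EV
    by (simp add: mult_left_mono)
  finally show ?thesis .
qed

lemma (in prob_space) real_cond_exp_bilinear_mgf_given_partition:
  fixes U V :: "'n::finite \<Rightarrow> 'a \<Rightarrow> real" and \<eta> :: "'n \<Rightarrow> 'a \<Rightarrow> bool" and b :: "'n \<Rightarrow> 'n \<Rightarrow> real"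
  assumes [measurable]: "\<And>i. U i \<in> borel_measurable M" "\<And>i. V i \<in> borel_measurable M"
      "\<And>i. \<eta> i \<in> measurable M (count_space UNIV)"
    and U01: "\<And>i \<omega>. \<omega> \<in> space M \<Longrightarrow> U i \<omega> \<in> {0, 1}"
    and V01: "\<And>j \<omega>. \<omega> \<in> space M \<Longrightarrow> V j \<omega> \<in> {0, 1}"
    and indep: "indep_set
      (sets (vimage_algebra (space M) (\<lambda>\<omega> i. \<eta> i \<omega>) (PiM UNIV (\<lambda>_. count_space UNIV))))
      (sets (vimage_algebra (space M) (\<lambda>\<omega> j. (U j \<omega>, V j \<omega>)) (PiM UNIV (\<lambda>_. borel))))"
    and b: "\<And>i j. 0 \<le> b i j" and "0 \<le> \<tau>"
  shows "AE \<omega> in M.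
    real_cond_exp M (vimage_algebra (space M) (\<lambda>\<omega> i. \<eta> i \<omega>) (PiM UNIV (\<lambda>_. count_space UNIV)))
      (\<lambda>\<omega>. exp (\<tau> * (\<Sum>i\<in>{i. \<eta> i \<omega>}. U i \<omega> * (\<Sum>j\<in>{j. \<not> \<eta> j \<omega>}. b i j * V j \<omega>)))) \<omega>
    = (\<integral>\<omega>'. exp (\<tau> * (\<Sum>i\<in>{i. \<eta> i \<omega>}. U i \<omega>' * (\<Sum>j\<in>{j. \<not> \<eta> j \<omega>}. b i j * V j \<omega>'))) \<partial>M)"
proof -
  let ?N = "PiM UNIV (\<lambda>_. count_space UNIV) :: ('n \<Rightarrow> bool) measure"
  define F where "F z = exp (\<tau> * (\<Sum>i\<in>{i. fst z i}. fst (snd z i) * (\<Sum>j\<in>{j. \<not> fst z j}. b i j * snd (snd z j))))"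
    for z :: "('n \<Rightarrow> bool) \<times> ('n \<Rightarrow> real \<times> real)"
  have N_eq: "?N = count_space UNIV"
    using count_space_PiM_finite[of "UNIV :: 'n set" "\<lambda>_. UNIV :: bool set"] by simp
  have [measurable]: "F \<in> borel_measurable (?N \<Otimes>\<^sub>M PiM UNIV (\<lambda>_. borel))"
    unfolding N_eq by (rule measurable_pair_measure_countable1) (simp_all add: F_def)
  have [measurable]: "(\<lambda>\<omega> i. \<eta> i \<omega>) \<in> measurable M ?N"
    using measurable_restrict[of UNIV "\<lambda>i \<omega>. \<eta> i \<omega>" M "\<lambda>_. count_space UNIV"] by (simp add: restrict_UNIV)
  have [measurable]: "(\<lambda>\<omega> j. (U j \<omega>, V j \<omega>)) \<in> measurable M (PiM UNIV (\<lambda>_. borel))"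
    using measurable_restrict[of UNIV "\<lambda>j \<omega>. (U j \<omega>, V j \<omega>)" M "\<lambda>_. borel"] by (simp add: restrict_UNIV)
  have U_unit: "0 \<le> U i \<omega> \<and> U i \<omega> \<le> 1" and V_unit: "0 \<le> V i \<omega> \<and> V i \<omega> \<le> 1"
    if "\<omega> \<in> space M" for i \<omega>
    using U01[OF that, of i] V01[OF that, of i] by auto
  have "\<bar>F (\<lambda>i. \<eta> i \<omega>, \<lambda>j. (U j \<omega>', V j \<omega>'))\<bar> \<le> exp (\<tau> * (\<Sum>i\<in>UNIV. \<Sum>j\<in>UNIV - {i}. b i j))"
    if "\<omega> \<in> space M" "\<omega>' \<in> space M" for \<omega> \<omega>'
  proof -
    have "(\<Sum>i\<in>{i. \<eta> i \<omega>}. U i \<omega>' * (\<Sum>j\<in>{j. \<not> \<eta> j \<omega>}. b i j * V j \<omega>'))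
        \<le> (\<Sum>i\<in>{i. \<eta> i \<omega>}. \<Sum>j\<in>{j. \<not> \<eta> j \<omega>}. b i j)"
      using U_unit[OF that(2)] V_unit[OF that(2)] b by (intro bilinear_sum_le) simp_all
    also have "\<dots> \<le> (\<Sum>i\<in>UNIV. \<Sum>j\<in>UNIV - {i}. b i j)"
      using b by (intro sum_disjoint_le_sum_off_diagonal) auto
    finally show ?thesis
      using \<open>0 \<le> \<tau>\<close> by (simp add: F_def mult_left_mono)
  qed
  from real_cond_exp_indep_freeze[where F=F, OF _ _ indep _ this] show ?thesis
    by (simp add: F_def)
qed

theorem lemma5:
  fixes M :: "'a measure"
    and A :: "real ^ 'n ^ 'n"
    and \<gamma>1 \<gamma>2 :: "'n \<Rightarrow> 'a \<Rightarrow> real"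
    and \<pi>1 \<pi>2 :: "'n \<Rightarrow> real"
    and \<eta> :: "'n \<Rightarrow> 'a \<Rightarrow> bool"
    and \<tau> :: real
  assumes "prob_space M"
    and rv1: "\<And>j. \<gamma>1 j \<in> borel_measurable M"
    and rv2: "\<And>j. \<gamma>2 j \<in> borel_measurable M"
    and bern1: "\<And>j. \<forall>\<omega>\<in>space M. \<gamma>1 j \<omega> \<in> {0, 1}"
    and bern2: "\<And>j. \<forall>\<omega>\<in>space M. \<gamma>2 j \<omega> \<in> {0, 1}"
    and mean1: "\<And>j. prob_space.expectation M (\<gamma>1 j) = \<pi>1 j"
    and mean2: "\<And>j. prob_space.expectation M (\<gamma>2 j) = \<pi>2 j"
    and indep_pairs: "prob_space.indep_vars M (\<lambda>_. borel) (\<lambda>j \<omega>. (\<gamma>1 j \<omega>, \<gamma>2 j \<omega>)) UNIV"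
    and rv_eta: "\<And>i. \<eta> i \<in> measurable M (count_space UNIV)"
    and eta_half: "\<And>i. measure M {\<omega> \<in> space M. \<eta> i \<omega>} = 1/2"
    and indep_eta: "prob_space.indep_vars M (\<lambda>_. count_space UNIV) \<eta> UNIV"
    and indep_eta_gamma: "prob_space.indep_set M
          (sets (vimage_algebra (space M) (\<lambda>\<omega> i. \<eta> i \<omega>) (PiM UNIV (\<lambda>_. count_space UNIV))))
          (sets (vimage_algebra (space M) (\<lambda>\<omega> j. (\<gamma>1 j \<omega>, \<gamma>2 j \<omega>)) (PiM UNIV (\<lambda>_. borel))))"
    and tau_pos: "0 < \<tau>"
    and tau_le: "4 * \<tau> * (onorm (\<lambda>x. A *v x))\<^sup>2 \<le> 1"
  shows "AE \<omega> in M.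
    real_cond_exp M
      (vimage_algebra (space M) (\<lambda>\<omega> i. \<eta> i \<omega>) (PiM UNIV (\<lambda>_. count_space UNIV)))
      (\<lambda>\<omega>. exp (\<tau> * (\<Sum>i\<in>{i. \<eta> i \<omega>}. \<gamma>1 i \<omega> *
                   (\<Sum>j\<in>{j. \<not> \<eta> j \<omega>}. (A $ i $ j)\<^sup>2 * \<gamma>2 j \<omega>)))) \<omega>
    \<le> exp (1.44 * \<tau> * (\<Sum>i\<in>UNIV. \<Sum>j\<in>UNIV - {i}. (A $ i $ j)\<^sup>2 * \<pi>1 i * \<pi>2 j))"
proof -
  interpret prob_space M by fact
  \<comment> \<open>The bound holds for every frozen value of \<eta>, so neither \<open>eta_half\<close> nor \<open>indep_eta\<close> is needed.\<close>
  have cond: "AE \<omega> in M.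
    real_cond_exp M (vimage_algebra (space M) (\<lambda>\<omega> i. \<eta> i \<omega>) (PiM UNIV (\<lambda>_. count_space UNIV)))
      (\<lambda>\<omega>. exp (\<tau> * (\<Sum>i\<in>{i. \<eta> i \<omega>}. \<gamma>1 i \<omega> * (\<Sum>j\<in>{j. \<not> \<eta> j \<omega>}. (A $ i $ j)\<^sup>2 * \<gamma>2 j \<omega>)))) \<omega>
    = (\<integral>\<omega>'. exp (\<tau> * (\<Sum>i\<in>{i. \<eta> i \<omega>}. \<gamma>1 i \<omega>' * (\<Sum>j\<in>{j. \<not> \<eta> j \<omega>}. (A $ i $ j)\<^sup>2 * \<gamma>2 j \<omega>'))) \<partial>M)"
    using rv1 rv2 rv_eta bern1 bern2 indep_eta_gamma tau_pos
    by (intro real_cond_exp_bilinear_mgf_given_partition) simp_all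
  have bound: "(\<integral>\<omega>'. exp (\<tau> * (\<Sum>i\<in>S. \<gamma>1 i \<omega>' * (\<Sum>j\<in>T. (A $ i $ j)\<^sup>2 * \<gamma>2 j \<omega>'))) \<partial>M)
      \<le> exp (1.44 * \<tau> * (\<Sum>i\<in>UNIV. \<Sum>j\<in>UNIV - {i}. (A $ i $ j)\<^sup>2 * \<pi>1 i * \<pi>2 j))"
    if "S \<inter> T = {}" for S T
    using decoupled_matrix_bernoulli_mgf_le[OF that indep_pairs _ _ _ tau_le] bern1 bern2 tau_pos
    by (simp add: mean1 mean2)
  from cond show ?thesis
  proof eventually_elim
    case (elim \<omega>)
    have "{i. \<eta> i \<omega>} \<inter> {j. \<not> \<eta> j \<omega>} = {}"
      by auto
    then show ?case
      unfolding elim by (rule bound)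
  qed
qed

end
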